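(* Let $\mathcal{W}=\{\mathbb{R}^d; f_1,\dots,f_N; p_1,\dots,p_N\}$ be a weighted IFS, $N\ge2$, with all $p_i>0$, $\sum_i p_i=1$, such that each $f_i$ satisfies $s_i\|x-y\|\le\|f_i(x)-f_i(y)\|\le c_i\|x-y\|$ for all $x,y\in\mathbb{R}^d$, where $0<s_i\le c_i<1$ (no separation condition is assumed). Let $\mu$ be its invariant Borel probability measure, let $r\in(0,\infty)$, and let $l_r\in(0,\infty)$ be the unique number with $\sum_{i=1}^N(p_ic_i^r)^{\frac{l_r}{r+l_r}}=1$. Then $$\limsup_{n\to\infty} n\cdot e_{n,r}(\mu)^{l_r}<\infty,$$ and consequently $\overline{D}_r(\mu)\le l_r$.
   Context: $\|\cdot\|$ is the Euclidean norm. The invariant measure of the weighted IFS is the unique Borel probability measure $\mu$ with $\mu=\sum_{i=1}^N p_i\,\mu\circ f_i^{-1}$. For a Borel probability measure $\mu$ on $\mathbb{R}^d$, $r>0$, $n\in\mathbb{N}$: $V_{n,r}(\mu)=\inf\{\int\operatorname{dist}(x,B)^r d\mu(x): B\subset\mathbb{R}^d,\ \operatorname{card}(B)\le n\}$, $e_{n,r}(\mu)=V_{n,r}(\mu)^{1/r}$, and $\overline{D}_r(\mu)=\limsup_{n\to\infty}\frac{\log n}{-\log e_{n,r}(\mu)}$. *)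

theory Defs
  imports "HOL-Probability.Probability"
begin

text \<open>Nonempty because dist(x,{}) is +infinity in the paper's convention
  (whereas infdist x {} = 0 in Isabelle).\<close>
definition quant_V :: "'a::euclidean_space measure \<Rightarrow> real \<Rightarrow> nat \<Rightarrow> ennreal" where
  "quant_V \<mu> r n = (INF B\<in>{B. finite B \<and> B \<noteq> {} \<and> card B \<le> n}.
      \<integral>\<^sup>+ x. ennreal (infdist x B powr r) \<partial>\<mu>)"

definition quant_e :: "'a::euclidean_space measure \<Rightarrow> real \<Rightarrow> nat \<Rightarrow> real" where
  "quant_e \<mu> r n = enn2real (quant_V \<mu> r n) powr (1 / r)"

definition upper_quant_dim :: "'a::euclidean_space measure \<Rightarrow> real \<Rightarrow> ereal" where
  "upper_quant_dim \<mu> r =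
     limsup (\<lambda>n. ereal (ln (real n) / (- ln (quant_e \<mu> r n))))"

end

theory Submission
  imports Defs
begin

text \<open>
  Put w_i = (p_i c_i^r)^(l/(r+l)); these weights sum to 1 and satisfy p_i c_i^r = w_i^(1+r/l).
  Codebooks are built recursively: a codebook for scale \<epsilon> is the union of the images f_i(B_i)
  of codebooks B_i for the scales \<epsilon>/w_i, the single point 0 serving as soon as \<epsilon> exceeds w_i.
  Invariance of \<mu> and the contraction bounds give cost(\<Union>_i f_i(B_i)) \<le> \<Sum>_i p_i c_i^r cost(B_i),
  so the two bounds "at most 1/(\<epsilon> min_i w_i) points" and "cost at most cost{0} \<epsilon>^(r/l)" pass
  from the scales \<epsilon>/w_i to the scale \<epsilon>. As \<mu> has bounded support, cost{0} is finite; the scale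
  \<epsilon> = 1/(n min_i w_i) then yields n e_{n,r}^l \<le> const, and taking logarithms bounds the upper
  quantization dimension.
\<close>

lemma nn_integral_eq_sum_if_emeasure_eq_sum:
  fixes g :: "'a \<Rightarrow> ennreal"
  assumes sets_eq: "\<And>i. i \<in> I \<Longrightarrow> sets (\<nu> i) = sets M"
    and emeasure_eq: "\<And>A. A \<in> sets M \<Longrightarrow> emeasure M A = (\<Sum>i\<in>I. w i * emeasure (\<nu> i) A)"
    and g: "g \<in> borel_measurable M"
  shows "(\<integral>\<^sup>+x. g x \<partial>M) = (\<Sum>i\<in>I. w i * (\<integral>\<^sup>+x. g x \<partial>\<nu> i))"
  using g
proof (induction rule: borel_measurable_induct)
  case (cong u v)
  have "(\<integral>\<^sup>+x. u x \<partial>\<nu> i) = (\<integral>\<^sup>+x. v x \<partial>\<nu> i)" if "i \<in> I" for i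
    using sets_eq_imp_space_eq[OF sets_eq[OF that]]
    by (intro nn_integral_cong) (metis cong.hyps(3))
  moreover have "(\<integral>\<^sup>+x. u x \<partial>M) = (\<integral>\<^sup>+x. v x \<partial>M)"
    by (intro nn_integral_cong) (metis cong.hyps(3))
  ultimately show ?case
    using cong.IH by (metis (no_types, lifting) sum.cong)
next
  case (set A)
  then show ?case
    using emeasure_eq sets_eq by (simp cong: sum.cong)
next
  case (mult u k)
  have "(\<integral>\<^sup>+x. k * u x \<partial>\<nu> i) = k * (\<integral>\<^sup>+x. u x \<partial>\<nu> i)" if "i \<in> I" for i
    using measurable_cong_sets[OF sets_eq[OF that] refl] mult.hyps(2)
    by (intro nn_integral_cmult) blast
  then have "(\<Sum>i\<in>I. w i * (\<integral>\<^sup>+x. k * u x \<partial>\<nu> i)) = k * (\<Sum>i\<in>I. w i * (\<integral>\<^sup>+x. u x \<partial>\<nu> i))"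
    unfolding sum_distrib_left by (intro sum.cong) (simp_all add: mult.left_commute)
  then show ?case
    using mult.IH by (simp add: nn_integral_cmult[OF mult.hyps(2)])
next
  case (add u v)
  have "(\<integral>\<^sup>+x. v x + u x \<partial>\<nu> i) = (\<integral>\<^sup>+x. v x \<partial>\<nu> i) + (\<integral>\<^sup>+x. u x \<partial>\<nu> i)" if "i \<in> I" for i
    using add.hyps(1,3) measurable_cong_sets[OF sets_eq[OF that] refl]
    by (intro nn_integral_add) blast+
  then have "(\<Sum>i\<in>I. w i * (\<integral>\<^sup>+x. v x + u x \<partial>\<nu> i)) =
      (\<Sum>i\<in>I. w i * (\<integral>\<^sup>+x. v x \<partial>\<nu> i)) + (\<Sum>i\<in>I. w i * (\<integral>\<^sup>+x. u x \<partial>\<nu> i))"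
    unfolding sum.distrib[symmetric] by (intro sum.cong) (simp_all add: distrib_left)
  then show ?case
    using add.IH by (simp add: nn_integral_add[OF add.hyps(3,1)])
next
  case (seq U)
  have meas: "i \<in> I \<Longrightarrow> U n \<in> borel_measurable (\<nu> i)" for i n
    using seq.hyps(1) measurable_cong_sets[OF sets_eq refl] by blast
  have "(\<integral>\<^sup>+x. (SUP n. U n) x \<partial>M) = (SUP n. \<integral>\<^sup>+x. U n x \<partial>M)"
    using seq.hyps(1,3) by (simp add: nn_integral_monotone_convergence_SUP image_comp)
  also have "\<dots> = (SUP n. \<Sum>i\<in>I. w i * (\<integral>\<^sup>+x. U n x \<partial>\<nu> i))"
    using seq.IH by simp
  also have "\<dots> = (\<Sum>i\<in>I. SUP n. w i * (\<integral>\<^sup>+x. U n x \<partial>\<nu> i))"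
    using seq.hyps(3)
    by (intro ennreal_SUP_sum)
      (auto intro!: mult_left_mono nn_integral_mono simp: incseq_def le_fun_def)
  also have "\<dots> = (\<Sum>i\<in>I. w i * (\<integral>\<^sup>+x. (SUP n. U n) x \<partial>\<nu> i))"
    using seq.hyps(3) meas
    by (simp add: SUP_mult_left_ennreal nn_integral_monotone_convergence_SUP image_comp
        cong: sum.cong)
  finally show ?case .
qed

lemma infdist_image_le:
  fixes g :: "'a::heine_borel \<Rightarrow> 'b::metric_space"
  assumes lip: "\<And>x y. dist (g x) (g y) \<le> k * dist x y" and B: "finite B" "B \<noteq> {}"
  shows "infdist (g x) (g ` B) \<le> k * infdist x B"
proof -
  obtain a where a: "a \<in> B" "infdist x B = dist x a"
    using infdist_attains_inf[OF finite_imp_closed[OF B(1)] B(2)] by metis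
  have "infdist (g x) (g ` B) \<le> dist (g x) (g a)"
    using a by (intro infdist_le) auto
  also have "\<dots> \<le> k * infdist x B"
    using lip a by simp
  finally show ?thesis .
qed

lemma nonpos_if_tendsto_zero_shift_le:
  fixes g :: "real \<Rightarrow> real"
  assumes lim: "(g \<longlongrightarrow> 0) at_top" and \<delta>: "0 < \<delta>"
    and shift: "\<And>t. R \<le> t \<Longrightarrow> g t \<le> g (t + \<delta>)"
  shows "g R \<le> 0"
proof -
  have iter: "g R \<le> g (R + real n * \<delta>)" for n
  proof (induction n)
    case (Suc n)
    have "g (R + real n * \<delta>) \<le> g (R + real n * \<delta> + \<delta>)"
      using \<delta> by (intro shift) simp
    with Suc show ?case
      by (simp add: algebra_simps)
  qed simp
  have "filterlim (\<lambda>n. R + real n * \<delta>) at_top sequentially"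
    using \<delta> by (intro filterlim_tendsto_add_at_top[OF tendsto_const]
        filterlim_at_top_mult_tendsto_pos[OF tendsto_const] filterlim_real_sequentially)
  then have "(\<lambda>n. g (R + real n * \<delta>)) \<longlonglongrightarrow> 0"
    by (rule filterlim_compose[OF lim])
  then show ?thesis
    using iter by (intro LIMSEQ_le_const) auto
qed

lemma log_ratio_le:
  fixes e n K l :: real
  assumes e: "0 \<le> e" and l: "0 < l" and K: "1 \<le> K" "K < n"
    and bound: "n * e powr l \<le> K"
  shows "ln n / (- ln e) \<le> l * ln n / (ln n - ln K)"
proof (cases "e = 0")
  case True
  \<comment> \<open>\<open>ln 0 = 0\<close>, so the left-hand side is 0\<close>
  have "0 < ln n - ln K"
    using K by simp
  then show ?thesis
    using True K l by simp
next
  case False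
  then have e: "0 < e" using e by simp
  have n: "0 < n" "0 < ln n"
    using K by auto
  have "e powr l \<le> K / n"
    using bound n by (simp add: field_simps)
  then have "ln (e powr l) \<le> ln (K / n)"
    using e n K by (subst ln_le_cancel_iff) auto
  then have le: "(ln n - ln K) / l \<le> - ln e"
    using e n K l by (simp add: ln_powr ln_div field_simps)
  have pos: "0 < (ln n - ln K) / l"
    using K l by simp
  then have "0 < - ln e"
    using le by linarith
  then have "ln n / (- ln e) \<le> ln n / ((ln n - ln K) / l)"
    using le pos n by (intro divide_left_mono mult_pos_pos) auto
  then show ?thesis
    by (simp add: mult.commute)
qed

lemma limsup_log_ratio_le:
  fixes e :: "nat \<Rightarrow> real"
  assumes e: "\<And>n. 0 \<le> e n" and l: "0 < l"
    and bound: "eventually (\<lambda>n. real n * e n powr l \<le> K) sequentially"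
  shows "limsup (\<lambda>n. ereal (ln (real n) / (- ln (e n)))) \<le> ereal l"
proof -
  define K' where "K' = max K 1"
  define g where "g n = l * ln (real n) / (ln (real n) - ln K')" for n :: nat
  have "eventually (\<lambda>n. K' < real n) sequentially"
    by (rule eventually_sequentiallyI[of "nat \<lceil>K'\<rceil> + 1"]) linarith
  with bound have "eventually (\<lambda>n. ln (real n) / (- ln (e n)) \<le> g n) sequentially"
  proof eventually_elim
    case (elim n)
    then show ?case
      unfolding g_def using log_ratio_le[OF e l, of K' "real n"] by (simp add: K'_def)
  qed
  then have "limsup (\<lambda>n. ereal (ln (real n) / (- ln (e n)))) \<le> limsup (\<lambda>n. ereal (g n))"
    by (intro Limsup_mono) (auto elim: eventually_mono)
  also have "limsup (\<lambda>n. ereal (g n)) = ereal l"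
  proof (intro lim_imp_Limsup)
    have "filterlim (\<lambda>n. ln (real n)) at_top sequentially"
      by (rule filterlim_compose[OF ln_at_top filterlim_real_sequentially])
    then have "(\<lambda>n. ln K' / ln (real n)) \<longlonglongrightarrow> 0"
      by (intro tendsto_divide_0[OF tendsto_const] filterlim_at_top_imp_at_infinity)
    then have "(\<lambda>n. l / (1 - ln K' / ln (real n))) \<longlonglongrightarrow> l / (1 - 0)"
      by (intro tendsto_intros) auto
    moreover have "eventually (\<lambda>n. l / (1 - ln K' / ln (real n)) = g n) sequentially"
      by (rule eventually_sequentiallyI[of 2]) (simp add: g_def field_simps)
    ultimately show "(\<lambda>n. ereal (g n)) \<longlonglongrightarrow> ereal l"
      by (simp add: lim_ereal tendsto_cong)
  qed simp
  finally show ?thesis .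
qed

lemma card_UN_image_le:
  assumes "finite I" "\<And>i. i \<in> I \<Longrightarrow> finite (B i)"
  shows "card (\<Union>i\<in>I. g i ` B i) \<le> (\<Sum>i\<in>I. card (B i))"
proof -
  have "card (\<Union>i\<in>I. g i ` B i) \<le> (\<Sum>i\<in>I. card (g i ` B i))"
    using assms by (intro card_UN_le)
  also have "\<dots> \<le> (\<Sum>i\<in>I. card (B i))"
    using assms by (intro sum_mono card_image_le)
  finally show ?thesis .
qed

lemma quant_e_powr_le:
  assumes r: "0 < r" and l: "0 \<le> l" and C: "0 \<le> C" and V: "quant_V \<mu> r n \<le> ennreal C"
  shows "quant_e \<mu> r n powr l \<le> C powr (l / r)"
proof -
  have "enn2real (quant_V \<mu> r n) \<le> C"
    using V C by (intro enn2real_leI) auto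
  then have "enn2real (quant_V \<mu> r n) powr (l / r) \<le> C powr (l / r)"
    using r l by (intro powr_mono2) auto
  then show ?thesis
    by (simp add: quant_e_def powr_powr)
qed

locale ifs_invariant_measure = prob_space \<mu>
  for \<mu> :: "'a::euclidean_space measure" +
  fixes f :: "nat \<Rightarrow> 'a \<Rightarrow> 'a" and p c :: "nat \<Rightarrow> real" and N :: nat
  assumes sets_\<mu>: "sets \<mu> = sets borel"
    and p_pos: "\<And>i. i < N \<Longrightarrow> 0 < p i"
    and c: "\<And>i. i < N \<Longrightarrow> 0 < c i \<and> c i < 1"
    and lipschitz: "\<And>i x y. i < N \<Longrightarrow> norm (f i x - f i y) \<le> c i * norm (x - y)"
    and invariant: "\<And>A. A \<in> sets borel \<Longrightarrow>
        emeasure \<mu> A = (\<Sum>i<N. ennreal (p i) * emeasure \<mu> (f i -` A))"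
begin

lemma space_\<mu> [simp]: "space \<mu> = UNIV"
  using sets_eq_imp_space_eq[OF sets_\<mu>] by simp

lemma sum_ennreal_p: "(\<Sum>i<N. ennreal (p i)) = 1"
  using invariant[of UNIV] emeasure_space_1 by simp

lemma sum_p: "(\<Sum>i<N. p i) = 1"
  using sum_ennreal_p p_pos by (subst (asm) sum_ennreal) (auto intro: less_imp_le sum_nonneg)

lemma N_pos: "0 < N"
  using sum_p by (cases N) auto

lemma measurable_f: "i < N \<Longrightarrow> f i \<in> measurable \<mu> \<mu>"
proof -
  assume i: "i < N"
  have "lipschitz_on (c i) UNIV (f i)"
    using lipschitz[OF i] c[OF i] by (auto intro!: lipschitz_onI simp: dist_norm)
  then have "f i \<in> borel_measurable borel"
    by (intro borel_measurable_continuous_onI lipschitz_on_continuous_on)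
  then show ?thesis
    using measurable_cong_sets[OF sets_\<mu> sets_\<mu>] by simp
qed

lemma nn_integral_invariant:
  fixes g :: "'a \<Rightarrow> ennreal"
  assumes g: "g \<in> borel_measurable \<mu>"
  shows "(\<integral>\<^sup>+x. g x \<partial>\<mu>) = (\<Sum>i<N. ennreal (p i) * (\<integral>\<^sup>+x. g (f i x) \<partial>\<mu>))"
proof -
  have "(\<integral>\<^sup>+x. g x \<partial>\<mu>) = (\<Sum>i<N. ennreal (p i) * (\<integral>\<^sup>+x. g x \<partial>distr \<mu> \<mu> (f i)))"
  proof (rule nn_integral_eq_sum_if_emeasure_eq_sum[OF _ _ g])
    fix A assume "A \<in> sets \<mu>"
    then show "emeasure \<mu> A = (\<Sum>i<N. ennreal (p i) * emeasure (distr \<mu> \<mu> (f i)) A)"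
      using measurable_f sets_\<mu> by (subst invariant) (auto simp: emeasure_distr intro!: sum.cong)
  qed simp
  also have "\<dots> = (\<Sum>i<N. ennreal (p i) * (\<integral>\<^sup>+x. g (f i x) \<partial>\<mu>))"
    using g measurable_f by (auto simp: nn_integral_distr intro!: sum.cong)
  finally show ?thesis .
qed

lemma affine_norm_bound: "\<exists>a b. 0 < a \<and> a < 1 \<and> (\<forall>i x. i < N \<longrightarrow> norm (f i x) \<le> a * norm x + b)"
proof (intro exI conjI allI impI)
  define a where "a = Max (c ` {..<N})"
  define b where "b = Max ((\<lambda>i. norm (f i 0)) ` {..<N})"
  have "{..<N} \<noteq> {}"
    using N_pos by auto
  then show "0 < a" "a < 1"
    using c by (auto simp: a_def Max_gr_iff Max_less_iff)
  fix i x assume i: "i < N"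
  have "norm (f i x) \<le> norm (f i x - f i 0) + norm (f i 0)"
    by (metis diff_add_cancel norm_triangle_ineq)
  also have "\<dots> \<le> c i * norm x + norm (f i 0)"
    using lipschitz[OF i, of x 0] by simp
  also have "\<dots> \<le> a * norm x + b"
    using i by (intro add_mono mult_right_mono) (auto simp: a_def b_def)
  finally show "norm (f i x) \<le> a * norm x + b" .
qed

lemma measure_norm_gt_le:
  assumes a: "0 < a" and bound: "\<And>i x. i < N \<Longrightarrow> norm (f i x) \<le> a * norm x + b"
  shows "measure \<mu> {x. t < norm x} \<le> measure \<mu> {x. (t - b) / a < norm x}"
proof -
  have sets: "{x. s < norm x} \<in> sets \<mu>" for s
    using sets_\<mu> by simp
  have "emeasure \<mu> {x. t < norm x} = (\<Sum>i<N. ennreal (p i) * emeasure \<mu> (f i -` {x. t < norm x}))"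
    by (rule invariant) simp
  also have "\<dots> \<le> (\<Sum>i<N. ennreal (p i) * emeasure \<mu> {x. (t - b) / a < norm x})"
  proof (intro sum_mono mult_left_mono emeasure_mono subsetI)
    fix i x assume "i \<in> {..<N}" "x \<in> f i -` {x. t < norm x}"
    then have "t < norm (f i x)" "i < N"
      by auto
    then have "t < a * norm x + b"
      using bound[of i x] by linarith
    then show "x \<in> {x. (t - b) / a < norm x}"
      using a by (simp add: pos_divide_less_eq mult.commute)
  qed (use sets in auto)
  also have "\<dots> = emeasure \<mu> {x. (t - b) / a < norm x}"
    by (simp add: sum_distrib_right[symmetric] sum_ennreal_p)
  finally show ?thesis
    by (simp add: emeasure_eq_measure)
qed

lemma tendsto_measure_norm_gt: "((\<lambda>t. measure \<mu> {x. t < norm x}) \<longlongrightarrow> 0) at_top"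
proof -
  have norm_measurable: "norm \<in> borel_measurable \<mu>"
    by (simp add: measurable_cong_sets[OF sets_\<mu> refl])
  interpret D: real_distribution "distr \<mu> borel norm"
    using norm_measurable by (rule real_distribution_distr)
  have "measure \<mu> {x. t < norm x} = 1 - cdf (distr \<mu> borel norm) t" for t
  proof -
    have "cdf (distr \<mu> borel norm) t = measure \<mu> {x. norm x \<le> t}"
      using norm_measurable by (simp add: cdf_def measure_distr vimage_def atMost_def)
    moreover have "measure \<mu> {x. t < norm x} = 1 - measure \<mu> {x. norm x \<le> t}"
      using prob_compl[of "{x. norm x \<le> t}"] sets_\<mu>
      by (simp add: Compl_eq_Diff_UNIV[symmetric] Collect_neg_eq[symmetric] not_le)
    ultimately show ?thesis
      by simp
  qed
  then show ?thesis
    using tendsto_diff[OF tendsto_const D.cdf_lim_at_top_prob, of 1] by simp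
qed

lemma AE_norm_le: "\<exists>R. AE x in \<mu>. norm x \<le> R"
proof -
  obtain a b where a: "0 < a" "a < 1" and bound: "\<And>i x. i < N \<Longrightarrow> norm (f i x) \<le> a * norm x + b"
    using affine_norm_bound by blast
  define R where "R = (a + b) / (1 - a)"
  \<comment> \<open>Beyond \<open>R\<close> every \<open>f i\<close> maps \<open>{x. norm x \<le> t + 1}\<close> into \<open>{x. norm x \<le> t}\<close>, so by
    invariance the tail mass does not drop when \<open>t\<close> grows by 1; since it tends to 0, it vanishes.\<close>
  have "measure \<mu> {x. t < norm x} \<le> measure \<mu> {x. t + 1 < norm x}" if t: "R \<le> t" for t
  proof -
    have "a + b \<le> (1 - a) * t"
      using t a by (simp add: R_def field_simps)
    then have "t + 1 \<le> (t - b) / a"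
      using a by (simp add: field_simps)
    then have "{x. (t - b) / a < norm x} \<subseteq> {x. t + 1 < norm x}"
      by auto
    then have "measure \<mu> {x. (t - b) / a < norm x} \<le> measure \<mu> {x. t + 1 < norm x}"
      using sets_\<mu> by (intro finite_measure_mono) simp_all
    then show ?thesis
      using measure_norm_gt_le[OF a(1) bound, of t] by linarith
  qed
  then have "measure \<mu> {x. R < norm x} \<le> 0"
    by (intro nonpos_if_tendsto_zero_shift_le[OF tendsto_measure_norm_gt]) auto
  then have "{x. R < norm x} \<in> null_sets \<mu>"
    using sets_\<mu> by (simp add: null_sets_def emeasure_eq_measure measure_nonneg antisym)
  then have "AE x in \<mu>. norm x \<le> R"
    by (rule AE_I') auto
  then show ?thesis ..
qed

lemma nn_integral_norm_powr_finite:
  assumes "0 \<le> r"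
  shows "(\<integral>\<^sup>+x. ennreal (norm x powr r) \<partial>\<mu>) < \<infinity>"
proof -
  obtain R where R: "AE x in \<mu>. norm x \<le> R"
    using AE_norm_le by blast
  have "(\<integral>\<^sup>+x. ennreal (norm x powr r) \<partial>\<mu>) \<le> (\<integral>\<^sup>+x. ennreal (R powr r) \<partial>\<mu>)"
    using R by (intro nn_integral_mono_AE) (auto elim!: eventually_mono intro!: powr_mono2 assms)
  also have "\<dots> < \<infinity>"
    using emeasure_space_1 by simp
  finally show ?thesis .
qed

end

locale ifs_quantization = ifs_invariant_measure +
  fixes r l :: real
  assumes two_le_N: "2 \<le> N" and r_pos: "0 < r" and l_pos: "0 < l"
    and l_eq: "(\<Sum>i<N. (p i * c i powr r) powr (l / (r + l))) = 1"
begin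

definition cost :: "'a set \<Rightarrow> ennreal" where
  "cost B = (\<integral>\<^sup>+x. ennreal (infdist x B powr r) \<partial>\<mu>)"

definition weight :: "nat \<Rightarrow> real" where
  "weight i = (p i * c i powr r) powr (l / (r + l))"

definition min_weight :: real where
  "min_weight = Min (weight ` {..<N})"

definition max_weight :: real where
  "max_weight = Max (weight ` {..<N})"

definition admissible :: "real \<Rightarrow> 'a set \<Rightarrow> bool" where
  "admissible \<epsilon> B \<longleftrightarrow> finite B \<and> B \<noteq> {} \<and> real (card B) \<le> 1 / (\<epsilon> * min_weight) \<and>
     cost B \<le> cost {0} * ennreal (\<epsilon> powr (r / l))"

lemma p_c_pos: "i < N \<Longrightarrow> 0 < p i * c i powr r"
  using p_pos[of i] c[of i] by simp

lemma weight_pos: "i < N \<Longrightarrow> 0 < weight i"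
  using p_pos[of i] c[of i] by (simp add: weight_def)

lemma sum_weight: "(\<Sum>i<N. weight i) = 1"
  using l_eq by (simp add: weight_def)

lemma weight_less_1:
  assumes i: "i < N"
  shows "weight i < 1"
proof -
  obtain j where j: "j < N" "j \<noteq> i"
    using two_le_N by (metis One_nat_def Suc_1 Suc_le_lessD less_2_cases_iff not_less_eq)
  have "weight i + weight j = (\<Sum>k\<in>{i, j}. weight k)"
    using j by simp
  also have "\<dots> \<le> (\<Sum>k<N. weight k)"
    using i j weight_pos by (intro sum_mono2) (auto intro: less_imp_le)
  finally show ?thesis
    using sum_weight weight_pos[OF j(1)] by simp
qed

lemma min_weight_pos: "0 < min_weight"
  using weight_pos N_pos unfolding min_weight_def by (subst Min_gr_iff) auto

lemma min_weight_le: "i < N \<Longrightarrow> min_weight \<le> weight i"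
  by (simp add: min_weight_def)

lemma weight_le_max_weight: "i < N \<Longrightarrow> weight i \<le> max_weight"
  by (simp add: max_weight_def)

lemma max_weight_pos: "0 < max_weight"
  using weight_pos[of 0] weight_le_max_weight[of 0] N_pos by linarith

lemma max_weight_less_1: "max_weight < 1"
  using weight_less_1 N_pos unfolding max_weight_def by (subst Max_less_iff) auto

lemma p_c_eq_weight_powr:
  assumes "i < N"
  shows "p i * c i powr r = weight i powr (1 + r / l)"
proof -
  have exponent: "l / (r + l) * (1 + r / l) = 1"
    using r_pos l_pos by (simp add: divide_simps)
  show ?thesis
    using p_c_pos[OF assms] unfolding weight_def powr_powr exponent by simp
qed

lemma cost_measurable: "(\<lambda>x. ennreal (infdist x B powr r)) \<in> borel_measurable \<mu>"
proof -
  have "(\<lambda>x. infdist x B) \<in> borel_measurable \<mu>"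
    by (simp add: measurable_cong_sets[OF sets_\<mu> refl] borel_measurable_continuous_onI
        continuous_on_infdist continuous_on_id)
  then show ?thesis
    by measurable
qed

lemma cost_union_image_le:
  assumes B: "\<And>i. i < N \<Longrightarrow> finite (B i) \<and> B i \<noteq> {}"
  shows "cost (\<Union>i<N. f i ` B i) \<le> (\<Sum>i<N. ennreal (p i * c i powr r) * cost (B i))"
proof -
  have pointwise: "ennreal (infdist (f i x) (\<Union>i<N. f i ` B i) powr r)
      \<le> ennreal (c i powr r) * ennreal (infdist x (B i) powr r)" if i: "i < N" for i x
  proof -
    have "infdist (f i x) (\<Union>i<N. f i ` B i) \<le> infdist (f i x) (f i ` B i)"
      using B[OF i] i by (intro infdist_mono) auto
    also have "\<dots> \<le> c i * infdist x (B i)"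
      using B[OF i] lipschitz[OF i] by (intro infdist_image_le) (auto simp: dist_norm)
    finally have "infdist (f i x) (\<Union>i<N. f i ` B i) powr r \<le> (c i * infdist x (B i)) powr r"
      using r_pos by (intro powr_mono2) (auto simp: infdist_nonneg)
    then show ?thesis
      using c[OF i] by (simp add: powr_mult ennreal_mult[symmetric])
  qed
  have "cost (\<Union>i<N. f i ` B i)
      = (\<Sum>i<N. ennreal (p i) * (\<integral>\<^sup>+x. ennreal (infdist (f i x) (\<Union>i<N. f i ` B i) powr r) \<partial>\<mu>))"
    unfolding cost_def by (rule nn_integral_invariant[OF cost_measurable])
  also have "\<dots> \<le> (\<Sum>i<N. ennreal (p i) * (ennreal (c i powr r) * cost (B i)))"
    unfolding cost_def using pointwise
    by (intro sum_mono mult_left_mono) (auto simp: nn_integral_cmult[OF cost_measurable, symmetric]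
        intro!: nn_integral_mono)
  also have "\<dots> = (\<Sum>i<N. ennreal (p i * c i powr r) * cost (B i))"
  proof (intro sum.cong refl)
    fix i assume "i \<in> {..<N}"
    then have "0 \<le> p i" "0 \<le> c i powr r"
      using p_pos[of i] by auto
    then show "ennreal (p i) * (ennreal (c i powr r) * cost (B i))
        = ennreal (p i * c i powr r) * cost (B i)"
      by (simp add: ennreal_mult mult.assoc)
  qed
  finally show ?thesis .
qed

lemma p_c_mult_powr_div_weight:
  assumes i: "i < N" and \<epsilon>: "0 < \<epsilon>"
  shows "p i * c i powr r * (\<epsilon> / weight i) powr (r / l) = weight i * \<epsilon> powr (r / l)"
  using weight_pos[OF i] \<epsilon>
  by (simp add: p_c_eq_weight_powr[OF i] powr_divide powr_add)

lemma admissible_singleton_0: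
  assumes \<epsilon>: "1 \<le> \<epsilon>" "\<epsilon> * min_weight \<le> 1"
  shows "admissible \<epsilon> {0}"
proof -
  have "1 \<le> 1 / (\<epsilon> * min_weight)"
    using \<epsilon> min_weight_pos by simp
  moreover have "cost {0} * 1 \<le> cost {0} * ennreal (\<epsilon> powr (r / l))"
    using \<epsilon> r_pos l_pos by (intro mult_left_mono) (auto intro: ge_one_powr_ge_zero)
  ultimately show ?thesis
    by (simp add: admissible_def)
qed

lemma admissible_union:
  assumes \<epsilon>: "0 < \<epsilon>" and B: "\<And>i. i < N \<Longrightarrow> admissible (\<epsilon> / weight i) (B i)"
  shows "admissible \<epsilon> (\<Union>i<N. f i ` B i)"
proof -
  have fin: "\<And>i. i < N \<Longrightarrow> finite (B i) \<and> B i \<noteq> {}"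
    using B by (simp add: admissible_def)
  have "real (card (\<Union>i<N. f i ` B i)) \<le> (\<Sum>i<N. real (card (B i)))"
    unfolding of_nat_sum[symmetric] of_nat_le_iff using fin by (intro card_UN_image_le) auto
  also have "\<dots> \<le> (\<Sum>i<N. weight i / (\<epsilon> * min_weight))"
    using B weight_pos by (intro sum_mono) (simp add: admissible_def)
  also have "\<dots> = 1 / (\<epsilon> * min_weight)"
    by (simp add: sum_divide_distrib[symmetric] sum_weight)
  finally have card: "real (card (\<Union>i<N. f i ` B i)) \<le> 1 / (\<epsilon> * min_weight)" .
  have "cost (\<Union>i<N. f i ` B i) \<le> (\<Sum>i<N. ennreal (p i * c i powr r) * cost (B i))"
    using fin by (rule cost_union_image_le)
  also have "\<dots> \<le>
      (\<Sum>i<N. ennreal (p i * c i powr r) * (cost {0} * ennreal ((\<epsilon> / weight i) powr (r / l))))"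
    using B by (intro sum_mono mult_left_mono) (simp_all add: admissible_def)
  also have "\<dots> = (\<Sum>i<N. cost {0} * ennreal (weight i * \<epsilon> powr (r / l)))"
  proof (intro sum.cong refl)
    fix i assume "i \<in> {..<N}"
    then have "ennreal (p i * c i powr r) * ennreal ((\<epsilon> / weight i) powr (r / l))
        = ennreal (weight i * \<epsilon> powr (r / l))"
      using p_c_pos[of i] by (simp add: ennreal_mult[symmetric] p_c_mult_powr_div_weight \<epsilon>)
    then show "ennreal (p i * c i powr r) * (cost {0} * ennreal ((\<epsilon> / weight i) powr (r / l)))
        = cost {0} * ennreal (weight i * \<epsilon> powr (r / l))"
      by (simp add: mult_ac)
  qed
  also have "\<dots> = cost {0} * ennreal (\<Sum>i<N. weight i * \<epsilon> powr (r / l))"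
    unfolding sum_distrib_left[symmetric]
    by (subst sum_ennreal) (auto intro!: mult_nonneg_nonneg less_imp_le[OF weight_pos])
  also have "\<dots> = cost {0} * ennreal (\<epsilon> powr (r / l))"
    by (simp add: sum_distrib_right[symmetric] sum_weight)
  finally have "cost (\<Union>i<N. f i ` B i) \<le> cost {0} * ennreal (\<epsilon> powr (r / l))" .
  moreover have "finite (\<Union>i<N. f i ` B i)" "(\<Union>i<N. f i ` B i) \<noteq> {}"
    using fin N_pos by auto
  ultimately show ?thesis
    using card by (simp add: admissible_def)
qed

lemma admissible_exists_of_pieces:
  assumes \<epsilon>: "0 < \<epsilon>" "\<epsilon> \<le> 1"
    and pieces: "\<And>i. i < N \<Longrightarrow> \<epsilon> \<le> weight i \<Longrightarrow> \<exists>B. admissible (\<epsilon> / weight i) B"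
  shows "\<exists>B. admissible \<epsilon> B"
proof -
  have "\<exists>B. admissible (\<epsilon> / weight i) B" if i: "i < N" for i
  proof (cases "\<epsilon> \<le> weight i")
    case True
    then show ?thesis
      by (rule pieces[OF i])
  next
    case False
    have "\<epsilon> * min_weight \<le> min_weight"
      using \<epsilon> min_weight_pos by (simp add: mult_le_cancel_right1)
    then have "\<epsilon> * min_weight \<le> weight i"
      using min_weight_le[OF i] by linarith
    then have "admissible (\<epsilon> / weight i) {0}"
      using False weight_pos[OF i] by (intro admissible_singleton_0) (auto simp: field_simps)
    then show ?thesis ..
  qed
  then have "\<forall>i. \<exists>B. i < N \<longrightarrow> admissible (\<epsilon> / weight i) B"
    by blast
  from choice[OF this] obtain B where "\<And>i. i < N \<Longrightarrow> admissible (\<epsilon> / weight i) (B i)"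
    by blast
  then have "admissible \<epsilon> (\<Union>i<N. f i ` B i)"
    using \<epsilon> by (intro admissible_union) auto
  then show ?thesis ..
qed

lemma admissible_exists_if_power_le:
  assumes "max_weight ^ j \<le> \<epsilon>" "\<epsilon> \<le> 1"
  shows "\<exists>B. admissible \<epsilon> B"
  using assms
proof (induction j arbitrary: \<epsilon>)
  case 0
  then have "\<epsilon> = 1"
    by simp
  then have no_piece: "\<not> \<epsilon> \<le> weight i" if "i < N" for i
    using weight_less_1[OF that] by simp
  show ?case
    by (rule admissible_exists_of_pieces) (use \<open>\<epsilon> = 1\<close> no_piece in simp_all)
next
  case (Suc j)
  have "0 < \<epsilon>"
    using Suc.prems(1) max_weight_pos by (meson order_less_le_trans zero_less_power)
  then show ?case
  proof (rule admissible_exists_of_pieces)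
    show "\<epsilon> \<le> 1"
      by (rule Suc.prems(2))
    fix i assume i: "i < N" and "\<epsilon> \<le> weight i"
    have "max_weight ^ j \<le> \<epsilon> / max_weight"
      using Suc.prems(1) max_weight_pos by (simp add: pos_le_divide_eq mult.commute)
    also have "\<dots> \<le> \<epsilon> / weight i"
      using \<open>0 < \<epsilon>\<close> weight_pos[OF i] weight_le_max_weight[OF i] by (intro divide_left_mono) auto
    finally show "\<exists>B. admissible (\<epsilon> / weight i) B"
      using \<open>\<epsilon> \<le> weight i\<close> weight_pos[OF i] by (intro Suc.IH) simp_all
  qed
qed

lemma admissible_exists:
  assumes \<epsilon>: "0 < \<epsilon>" "\<epsilon> \<le> 1"
  shows "\<exists>B. admissible \<epsilon> B"
proof -
  obtain j where "max_weight ^ j < \<epsilon>"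
    using real_arch_pow_inv[OF \<epsilon>(1) max_weight_less_1] by blast
  then show ?thesis
    using \<epsilon>(2) by (intro admissible_exists_if_power_le[of j]) auto
qed

lemma quant_V_le_cost: "admissible \<epsilon> B \<Longrightarrow> card B \<le> n \<Longrightarrow> quant_V \<mu> r n \<le> cost B"
  unfolding quant_V_def cost_def admissible_def by (rule INF_lower) auto

lemma cost_0_less_top: "cost {0} < \<infinity>"
  using nn_integral_norm_powr_finite[of r] r_pos by (simp add: cost_def)

lemma n_quant_e_powr_le:
  assumes n: "1 / min_weight \<le> real n"
  shows "real n * quant_e \<mu> r n powr l \<le> enn2real (cost {0}) powr (l / r) / min_weight"
proof -
  define C where "C = enn2real (cost {0})"
  have cost_0: "cost {0} = ennreal C" "0 \<le> C"
    using cost_0_less_top by (simp_all add: C_def less_top)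
  define \<epsilon> where "\<epsilon> = 1 / (real n * min_weight)"
  have n_pos: "0 < real n"
    using n min_weight_pos by (meson divide_pos_pos order_less_le_trans zero_less_one)
  have \<epsilon>: "0 < \<epsilon>" "\<epsilon> \<le> 1"
    using n n_pos min_weight_pos by (auto simp: \<epsilon>_def field_simps)
  obtain B where B: "admissible \<epsilon> B"
    using admissible_exists[OF \<epsilon>] by blast
  then have "card B \<le> n"
    using n_pos min_weight_pos by (simp add: admissible_def \<epsilon>_def)
  then have "quant_V \<mu> r n \<le> ennreal C * ennreal (\<epsilon> powr (r / l))"
    using B quant_V_le_cost[OF B] cost_0 by (force simp: admissible_def)
  then have "quant_e \<mu> r n powr l \<le> (C * \<epsilon> powr (r / l)) powr (l / r)"
    using r_pos l_pos cost_0 by (intro quant_e_powr_le) (auto simp: ennreal_mult)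
  also have "\<dots> = C powr (l / r) * \<epsilon>"
    using cost_0 \<epsilon> r_pos l_pos by (simp add: powr_mult powr_powr)
  finally have "real n * quant_e \<mu> r n powr l \<le> real n * (C powr (l / r) * \<epsilon>)"
    using n_pos by (intro mult_left_mono) auto
  also have "\<dots> = C powr (l / r) / min_weight"
    using n_pos min_weight_pos by (simp add: \<epsilon>_def)
  finally show ?thesis
    by (simp add: C_def)
qed

lemma eventually_n_quant_e_powr_le:
  "eventually (\<lambda>n. real n * quant_e \<mu> r n powr l \<le> enn2real (cost {0}) powr (l / r) / min_weight)
     sequentially"
proof (rule eventually_sequentiallyI[of "nat \<lceil>1 / min_weight\<rceil>"])
  fix n assume "nat \<lceil>1 / min_weight\<rceil> \<le> n"
  then show "real n * quant_e \<mu> r n powr l \<le> enn2real (cost {0}) powr (l / r) / min_weight"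
    by (intro n_quant_e_powr_le) linarith
qed

end

theorem theorem4:
  fixes f :: "nat \<Rightarrow> 'a::euclidean_space \<Rightarrow> 'a"
    and p s c :: "nat \<Rightarrow> real"
    and N :: nat and \<mu> :: "'a measure" and r l :: real
  assumes N: "N \<ge> 2"
    and p_pos: "\<And>i. i < N \<Longrightarrow> p i > 0"
    and p_sum: "(\<Sum>i<N. p i) = 1"
    and sc: "\<And>i. i < N \<Longrightarrow> 0 < s i \<and> s i \<le> c i \<and> c i < 1"
    and bilip: "\<And>i x y. i < N \<Longrightarrow>
        s i * norm (x - y) \<le> norm (f i x - f i y) \<and> norm (f i x - f i y) \<le> c i * norm (x - y)"
    and mu_borel: "sets \<mu> = sets borel"
    and mu_prob: "prob_space \<mu>"
    and mu_inv: "\<And>A. A \<in> sets borel \<Longrightarrow>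
        emeasure \<mu> A = (\<Sum>i<N. ennreal (p i) * emeasure \<mu> (f i -` A))"
    and r: "0 < r"
    and l: "0 < l"
    and l_eq: "(\<Sum>i<N. (p i * c i powr r) powr (l / (r + l))) = 1"
  shows "limsup (\<lambda>n. ereal (real n * quant_e \<mu> r n powr l)) < \<infinity> \<and>
         upper_quant_dim \<mu> r \<le> ereal l"
proof -
  have c: "\<And>i. i < N \<Longrightarrow> 0 < c i \<and> c i < 1"
    using sc by (meson order_less_le_trans)
  have lipschitz: "\<And>i x y. i < N \<Longrightarrow> norm (f i x - f i y) \<le> c i * norm (x - y)"
    using bilip by blast
  interpret ifs_quantization \<mu> f p c N r l
    by (intro ifs_quantization.intro ifs_invariant_measure.intro ifs_invariant_measure_axioms.intro
        ifs_quantization_axioms.intro) (fact mu_prob mu_borel p_pos c lipschitz mu_inv N r l l_eq)+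
  define K where "K = enn2real (cost {0}) powr (l / r) / min_weight"
  have K: "eventually (\<lambda>n. real n * quant_e \<mu> r n powr l \<le> K) sequentially"
    unfolding K_def by (rule eventually_n_quant_e_powr_le)
  have "limsup (\<lambda>n. ereal (real n * quant_e \<mu> r n powr l)) \<le> ereal K"
    using K by (intro Limsup_bounded) (auto elim: eventually_mono)
  then have "limsup (\<lambda>n. ereal (real n * quant_e \<mu> r n powr l)) < \<infinity>"
    using order.strict_trans1 by fastforce
  moreover have "upper_quant_dim \<mu> r \<le> ereal l"
    unfolding upper_quant_dim_def using l K
    by (intro limsup_log_ratio_le) (simp_all add: quant_e_def)
  ultimately show ?thesis ..
qed

end
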